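(* Let $m,n$ be positive integers, let $\bm{D}_0\in\mathbb{R}^{m\times m}$ be invertible, let $\bm{X}_0\in\mathbb{R}^{m\times n}$, and let $\bm{Y}=\bm{D}_0\bm{X}_0$. Let $\Omega\subseteq[m]\times[n]$ be the support of $\bm{X}_0$ (the set of index pairs of its nonzero entries) and $\Omega^c$ its complement. Consider the linear system in the unknowns $\bm{H}\in\mathbb{R}^{m\times m}$ and $\bm{X}\in\mathbb{R}^{m\times n}$: $$\left[\bm{Y}^{T},-\bm{I}_{n\times n}\right]\left[\begin{array}{c}\bm{H}^{T}\\ \bm{X}^{T}\end{array}\right]=\bm{0}_{n\times m}\quad\text{and}\quad \mathcal{P}_{\Omega^{c}}(\bm{X})=\bm{0},$$ i.e. $\bm{H}\bm{Y}=\bm{X}$ and $\bm{X}_{i,j}=0$ for all $(i,j)\in\Omega^c$. Then this system has at least $m$ linearly independent solutions, where a solution is identified with the matrix $\left[\bm{H},\bm{X}\right]^{T}\in\mathbb{R}^{(m+n)\times m}$.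
   Context: $[n]=\{1,\dots,n\}$. For a matrix $\bm{X}$ and an index set $\Omega^c$, $\mathcal{P}_{\Omega^c}(\bm{X})$ denotes the vector of entries of $\bm{X}$ indexed by $\Omega^c$. *)

theory Defs
  imports "HOL-Analysis.Analysis"
begin

definition matrix_support :: "real^'n^'m \<Rightarrow> ('m \<times> 'n) set" where
  "matrix_support A = {(i, j). A $ i $ j \<noteq> 0}"

text \<open>A solution is the pair (H, X),
  i.e. the block matrix [H, X]^T, viewed as an element of the product vector space.\<close>
definition solution_set :: "real^'m^'m \<Rightarrow> real^'n^'m \<Rightarrow> ((real^'m^'m) \<times> (real^'n^'m)) set" where
  "solution_set D0 X0 =
     {p. fst p ** (D0 ** X0) = snd p \<and>
          (\<forall>i j. (i, j) \<notin> matrix_support X0 \<longrightarrow> snd p $ i $ j = 0)}"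

end

theory Submission
  imports Defs
begin

text \<open>Let \<open>D\<^sub>i\<close> be a left inverse of \<open>D\<^sub>0\<close> and \<open>E\<^sub>k\<close> the matrix unit at \<open>(k, k)\<close>.
  Each pair \<open>(E\<^sub>k D\<^sub>i, E\<^sub>k X\<^sub>0)\<close> solves the system, since \<open>E\<^sub>k D\<^sub>i Y = E\<^sub>k X\<^sub>0\<close> keeps only
  row \<open>k\<close> of \<open>X\<^sub>0\<close>. These pairs are the image of the independent family \<open>E\<^sub>k\<close>
  under the injective linear map \<open>A \<mapsto> (A D\<^sub>i, A X\<^sub>0)\<close>, hence independent.\<close>

lemma linear_matrix_mult_right: "linear (\<lambda>A :: real^'n^'m. A ** B)"
  by (rule linearI) (vector matrix_matrix_mult_def sum.distrib[symmetric] sum_distrib_left field_simps)+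

lemma inj_matrix_mult_right: "B ** C = mat 1 \<Longrightarrow> inj (\<lambda>A. A ** B)"
  by (rule injI) (metis matrix_mul_assoc matrix_mul_rid)

lemma axis_axis_matrix_mult: "axis k (axis k 1) ** A = axis k (A $ k)"
  by (simp add: vec_eq_iff matrix_matrix_mult_def axis_def if_distrib[of "\<lambda>c. c * _"] cong: if_cong)

lemma independent_range_axis_axis: "independent (range (\<lambda>k. axis k (axis k 1) :: real^'n^'n))"
  by (rule independent_mono[OF independent_Basis]) auto

lemma inj_axis_axis: "inj (\<lambda>k. axis k (axis k (1::real)))"
  by (rule injI) (metis axis_eq_axis zero_neq_one)

lemma matrix_unit_pair_in_solution_set:
  fixes D0 Di :: "real^'m^'m" and X0 :: "real^'n^'m"
  assumes "Di ** D0 = mat 1"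
  shows "(axis k (axis k 1) ** Di, axis k (axis k 1) ** X0) \<in> solution_set D0 X0"
proof -
  have "axis k (axis k 1) ** Di ** (D0 ** X0) = axis k (axis k 1) ** X0"
    by (metis assms matrix_mul_assoc matrix_mul_lid)
  moreover have "(axis k (axis k 1) ** X0) $ i $ j = 0" if "(i, j) \<notin> matrix_support X0" for i j
    using that unfolding axis_axis_matrix_mult by (auto simp: axis_def matrix_support_def)
  ultimately show ?thesis
    by (simp add: solution_set_def)
qed

theorem proposition1:
  fixes D0 :: "real^'m^'m" and X0 :: "real^'n^'m"
  assumes "invertible D0"
  shows "\<exists>S. S \<subseteq> solution_set D0 X0 \<and> independent S \<and> card S = CARD('m)"
proof -
  obtain Di where Di: "Di ** D0 = mat 1"
    using assms unfolding invertible_def by blast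
  define E :: "'m \<Rightarrow> real^'m^'m" where "E k = axis k (axis k 1)" for k
  define L where "L A = (A ** Di, A ** X0)" for A :: "real^'m^'m"
  have "linear L"
    unfolding L_def linear_conv_bounded_linear
    by (intro bounded_linear_Pair linear_matrix_mult_right[unfolded linear_conv_bounded_linear])
  moreover have "inj L"
    using inj_matrix_mult_right[OF Di] by (auto simp: L_def inj_def)
  ultimately have "independent (L ` range E)"
    using independent_range_axis_axis unfolding E_def
    by (intro linear_independent_injective_image) (auto intro: inj_on_subset)
  moreover have "L ` range E \<subseteq> solution_set D0 X0"
    using matrix_unit_pair_in_solution_set[OF Di] by (auto simp: L_def E_def)
  moreover have "card (L ` range E) = CARD('m)"
    using card_image[OF inj_axis_axis] card_image[OF inj_on_subset[OF \<open>inj L\<close>]]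
    unfolding E_def by simp
  ultimately show ?thesis
    by blast
qed

end
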